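(* Let $\mathcal{T}:\mathrm{Cvx}(\mathbb{R}^n)\to\mathrm{Cvx}(\mathbb{R}^n)$ satisfy: (1) $\phi\le\psi$ iff $\mathcal{T}\phi\le\mathcal{T}\psi$; (2) $\mathcal{T}\phi=\phi$ for every positively homogeneous $\phi\in\mathrm{Cvx}(\mathbb{R}^n)$; (3) whenever $\phi',\psi'\in\mathrm{Im}\,\mathcal{T}$ and $\phi'+\psi'$ is finite at some point, $\phi'+\psi'\in\mathrm{Im}\,\mathcal{T}$. Then there exists $\gamma>0$ such that for every $a\in\mathbb{R}^n$ and $c\in\mathbb{R}$, $\mathcal{T}$ maps the affine function $x\mapsto\langle x,a\rangle+c$ to the affine function $x\mapsto\langle x,a\rangle+\gamma c$. In particular every affine function lies in $\mathrm{Im}\,\mathcal{T}$.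
   Context: $\mathrm{Cvx}(\mathbb{R}^n)$ denotes the set of functions $\phi:\mathbb{R}^n\to(-\infty,\infty]$ that are convex, lower semicontinuous, and finite at at least one point; $\mathrm{Im}\,\mathcal{T}=\{\mathcal{T}\phi:\phi\in\mathrm{Cvx}(\mathbb{R}^n)\}$. Positively homogeneous means $\phi(\lambda x)=\lambda\phi(x)$ for all $x$ and $\lambda>0$. *)

theory Defs
  imports "HOL-Analysis.Analysis" "HOL-Library.Extended_Real"
begin

text \<open>Functions R^n -> (-inf, +inf], encoded as ereal-valued functions never equal to -infinity.\<close>

definition epi :: "('a::real_normed_vector \<Rightarrow> ereal) \<Rightarrow> ('a \<times> real) set" where
  "epi \<phi> = {(x, t). \<phi> x \<le> ereal t}"

definition Cvx :: "(real^'n \<Rightarrow> ereal) set" where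
  "Cvx = {\<phi>. (\<forall>x. \<phi> x \<noteq> -\<infinity>) \<and> convex (epi \<phi>) \<and> closed (epi \<phi>)
              \<and> (\<exists>x. \<phi> x \<noteq> \<infinity>)}"

definition pos_homogeneous :: "('a::real_vector \<Rightarrow> ereal) \<Rightarrow> bool" where
  "pos_homogeneous \<phi> \<longleftrightarrow> (\<forall>x. \<forall>t::real. t > 0 \<longrightarrow> \<phi> (t *\<^sub>R x) = ereal t * \<phi> x)"

definition ImT :: "((real^'n \<Rightarrow> ereal) \<Rightarrow> (real^'n \<Rightarrow> ereal)) \<Rightarrow> (real^'n \<Rightarrow> ereal) set" where
  "ImT T = T ` Cvx"

end

theory Submission
  imports Defs
begin

(* Write aff a c for the affine function x \<mapsto> \<langle>x,a\<rangle> + c.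
   (1) Order facts alone show that T maps aff a c to an affine function of the same slope:
       for c \<le> 0 because T(aff a c) lies below the fixed linear function aff a 0, and a
       convex function below an affine one is affine with the same slope; for c > 0 after
       adding a large negative constant taken from the image of T.  So T(aff a c) = aff a (f a c)
       with f a strictly increasing.
   (2) Sums of images show that f a has the same range for every a, and that the preimages of
       a common level d along a segment [a1,b1] depend affinely on the point of the segment;
       an affine function of one real variable that keeps its sign is constant, so f a = u
       does not depend on a.
   (3) For any order embedding F of Cvx that transports aff a c to aff a (h c), the profile h is
       concave (test against maxima of two affine functions).  Applied to T this makes u concave,
       hence continuous and onto; applied to "T followed by adding the constant u e" it makes
       c \<mapsto> u\<inverse>(u c + u e) and its inverse concave, hence affine, so u is additive.
   (4) A concave additive function of one real variable is linear: u c = \<gamma> c with \<gamma> = u 1 > 0. *)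

section \<open>Facts about real functions\<close>

lemma convex_bounded_above_le:
  fixes k :: "'a::real_vector \<Rightarrow> real"
  assumes conv: "\<And>x y u. 0 \<le> u \<Longrightarrow> u \<le> 1 \<Longrightarrow> k ((1-u) *\<^sub>R x + u *\<^sub>R y) \<le> (1-u) * k x + u * k y"
    and bnd: "\<And>x. k x \<le> M"
  shows "k x \<le> k y"
proof (rule ccontr)
  assume "\<not> k x \<le> k y"
  hence lt: "k y < k x" by simp
  define t where "t = (M - k x)/(k x - k y) + 1"
  have t0: "t \<ge> 0" using lt bnd[of x] unfolding t_def by simp
  define z where "z = x + t *\<^sub>R (x - y)"
  define u where "u = t/(1+t)"
  have u0: "0 \<le> u" "u \<le> 1" using t0 unfolding u_def by auto
  have "(1-u) *\<^sub>R z + u *\<^sub>R y = x"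
  proof -
    have "(1-u)*t = u" using t0 unfolding u_def by (simp add: field_simps)
    hence "(1-u) *\<^sub>R z = (1-u) *\<^sub>R x + u *\<^sub>R (x - y)"
      unfolding z_def by (simp add: scaleR_add_right)
    thus ?thesis by (simp add: algebra_simps)
  qed
  hence "k x \<le> (1-u) * k z + u * k y" using conv[OF u0, of z y] by simp
  hence "(1+t) * k x \<le> (1+t) * ((1-u) * k z + u * k y)" using t0 by (simp add: mult_left_mono)
  also have "\<dots> = ((1+t)*(1-u)) * k z + ((1+t)*u) * k y" by (simp add: algebra_simps)
  also have "\<dots> = k z + t * k y"
  proof -
    have "(1+t)*(1-u) = 1" "(1+t)*u = t" using t0 unfolding u_def by (simp_all add: field_simps)
    thus ?thesis by simp
  qed
  finally have "(1+t) * k x \<le> k z + t * k y" .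
  hence "k z \<ge> k x + t * (k x - k y)" by (simp add: algebra_simps)
  moreover have "t * (k x - k y) = M - k x + (k x - k y)"
    using lt unfolding t_def by (simp add: field_simps)
  ultimately have "k z > M" using lt by simp
  thus False using bnd[of z] by simp
qed

text \<open>A strictly increasing g is concave as soon as g k \<le> (1-\<theta>) g c1 + \<theta> g c2 forces
  k \<le> (1-\<theta>) c1 + \<theta> c2: otherwise the strict monotonicity on two nearby chords is violated.\<close>

lemma concave_from_sublevel:
  fixes g :: "real \<Rightarrow> real"
  assumes mono: "\<And>x y. x < y \<Longrightarrow> g x < g y"
    and W: "\<And>c1 c2 \<theta> k. 0 \<le> \<theta> \<Longrightarrow> \<theta> \<le> 1 \<Longrightarrow> g k \<le> (1-\<theta>)*g c1 + \<theta>*g c2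
              \<Longrightarrow> k \<le> (1-\<theta>)*c1 + \<theta>*c2"
    and th: "0 \<le> \<theta>" "\<theta> \<le> 1"
  shows "(1-\<theta>)*g c1 + \<theta>*g c2 \<le> g((1-\<theta>)*c1 + \<theta>*c2)"
proof (rule ccontr)
  define m where "m = (1-\<theta>)*c1 + \<theta>*c2"
  define x where "x = (1-\<theta>)*g c1 + \<theta>*g c2"
  assume "\<not> ?thesis"
  hence gm: "g m < x" unfolding m_def x_def by simp
  define D where "D = x - g m"
  have D: "D > 0" using gm D_def by simp
  have above: "g k > x" if "k > m" for k
    using W[OF th, of k] that unfolding m_def x_def by (meson not_le)
  define q where "q = g m - g (m-1)"
  have q: "q > 0" using mono[of "m-1" m] q_def by simp
  define k' where "k' = m + D/q/2"
  have gk': "g k' > x" using above D q k'_def by simp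
  define th' where "th' = q / (g k' - g (m-1))"
  have den: "g k' - g (m-1) > q" using gk' gm q_def by simp
  have th'0: "0 \<le> th'" and th'1: "th' \<le> 1" using den q th'_def by auto
  have "th' * (g k' - g (m-1)) = q" using den q unfolding th'_def by simp
  hence "(1-th')*g (m-1) + th'*g k' = g m" unfolding q_def by (simp add: algebra_simps)
  hence "m \<le> (1-th')*(m-1) + th'*k'" using W[OF th'0 th'1, of m "m-1" k'] by simp
  hence "1 \<le> th' * (k' - m + 1)" by (simp add: algebra_simps)
  hence "1 \<le> q * (D/q/2 + 1) / (g k' - g (m-1))" unfolding th'_def k'_def by simp
  hence "g k' - g (m-1) \<le> q * (D/q/2 + 1)" using den q by (simp add: field_simps)
  also have "q * (D/q/2 + 1) = D/2 + q" using q by (simp add: field_simps)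
  finally show False using gk' gm D_def q_def by linarith
qed

lemma affine_real_form:
  fixes g :: "real \<Rightarrow> real"
  assumes A: "\<And>s t \<theta>. 0 \<le> \<theta> \<Longrightarrow> \<theta> \<le> 1 \<Longrightarrow> g((1-\<theta>) * s + \<theta>*t) = (1-\<theta>)*g s + \<theta>*g t"
  shows "g t = g 0 + t*(g 1 - g 0)"
proof -
  consider "0 \<le> t" "t \<le> 1" | "t > 1" | "t < 0" by linarith
  thus ?thesis
  proof cases
    case 1 then show ?thesis using A[of t 0 1] by (simp add: algebra_simps)
  next
    case 2
    have "g 1 = (1 - 1/t)*g 0 + (1/t)*g t" using A[of "1/t" 0 t] 2 by simp
    then show ?thesis using 2 by (simp add: field_simps)
  next
    case 3
    have t1: "1 - t \<noteq> 0" using 3 by simp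
    have "0 \<le> 1/(1-t)" "1/(1-t) \<le> 1" using 3 by auto
    from A[OF this, of 1 t] have e: "g 0 = (1 - 1/(1-t))*g 1 + (1/(1-t))*g t"
      using t1 by (simp add: field_simps)
    have "(1 - 1/(1-t)) = -t/(1-t)" using t1 by (simp add: field_simps)
    with e have "g 0 = (-t * g 1 + g t)/(1-t)" by (simp add: diff_divide_distrib)
    hence "g 0 * (1-t) = -t * g 1 + g t" using t1 by simp
    then show ?thesis by (simp add: algebra_simps)
  qed
qed

lemma affine_nonneg_const:
  fixes b \<alpha> :: real
  assumes "\<And>t. 0 \<le> b + t * \<alpha>"
  shows "\<alpha> = 0"
proof (rule ccontr)
  assume "\<alpha> \<noteq> 0"
  hence "b + (-(b + 1)/\<alpha>) * \<alpha> = -1" by simp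
  thus False using assms[of "-(b + 1)/\<alpha>"] by simp
qed

lemma concave_additive_linear:
  fixes g :: "real \<Rightarrow> real"
  assumes conc: "\<And>s t \<theta>. 0 \<le> \<theta> \<Longrightarrow> \<theta> \<le> 1 \<Longrightarrow> (1-\<theta>)*g s + \<theta>*g t \<le> g((1-\<theta>) * s + \<theta>*t)"
    and add: "\<And>x y. g (x + y) = g x + g y"
  shows "g c = g 1 * c"
proof -
  have g0: "g 0 = 0" using add[of 0 0] by simp
  have odd: "g (-x) = - g x" for x using add[of x "-x"] g0 by simp
  have scale: "g (t*x) = t * g x" if "0 \<le> t" "t \<le> 1" for t x
  proof -
    have "t * g x \<le> g (t*x)" using conc[of t 0 x] that g0 by simp
    moreover have "t * g (-x) \<le> g (t*(-x))" using conc[of t 0 "-x"] that g0 by simp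
    ultimately show ?thesis using odd[of x] odd[of "t*x"] by simp
  qed
  have pos: "g c = g 1 * c" if "0 \<le> c" for c
  proof (cases "c \<le> 1")
    case True then show ?thesis using scale[of c 1] that by simp
  next
    case False
    hence "g 1 = (1/c) * g c" using scale[of "1/c" c] by simp
    then show ?thesis using False by (simp add: field_simps)
  qed
  show ?thesis
  proof (cases "0 \<le> c")
    case True then show ?thesis by (rule pos)
  next
    case False then show ?thesis using pos[of "-c"] odd[of c] by simp
  qed
qed

lemma comb_le_max:
  assumes "0 \<le> (\<theta>::real)" "\<theta> \<le> 1" shows "(1-\<theta>)*p + \<theta>*q \<le> max p q"
proof -
  have "(1-\<theta>)*p \<le> (1-\<theta>)*max p q" "\<theta>*q \<le> \<theta>*max p q"
    using assms by (simp_all add: mult_left_mono)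
  thus ?thesis by (simp add: algebra_simps)
qed

section \<open>Affine functions as elements of Cvx\<close>

definition aff :: "real^'n \<Rightarrow> real \<Rightarrow> real^'n \<Rightarrow> ereal" where
  "aff a c = (\<lambda>x. ereal (x \<bullet> a + c))"

text \<open>The maximum of two affine functions is closed convex and finite: its epigraph is an
  intersection of two closed half-spaces.\<close>

lemma max_aff_Cvx: "(\<lambda>x. max (aff a c x) (aff b d x)) \<in> Cvx"
proof -
  have halfsp: "{p :: (real^'n) \<times> real. fst p \<bullet> a' + c' \<le> snd p} = {p. inner (a', -1::real) p \<le> -c'}"
    for a' c' by (auto simp: inner_Pair_0 inner_commute)
  have e: "epi (\<lambda>x. max (aff a c x) (aff b d x))
           = {p. fst p \<bullet> a + c \<le> snd p} \<inter> {p. fst p \<bullet> b + d \<le> snd p}"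
    unfolding epi_def aff_def by auto
  have "convex (epi (\<lambda>x. max (aff a c x) (aff b d x)))"
    unfolding e halfsp by (intro convex_Int convex_halfspace_le)
  moreover have "closed (epi (\<lambda>x. max (aff a c x) (aff b d x)))"
    unfolding e halfsp by (intro closed_Int closed_halfspace_le)
  ultimately show ?thesis unfolding Cvx_def by (simp add: aff_def max_def)
qed

lemma aff_Cvx: "aff a c \<in> Cvx"
  using max_aff_Cvx[of a c a c] by simp

lemma aff_le_iff: "aff a c \<le> aff a c' \<longleftrightarrow> c \<le> c'"
  unfolding aff_def le_fun_def by (auto dest: spec[of _ 0])

lemma aff_eq_iff: "aff a c = aff a c' \<longleftrightarrow> c = c'"
  by (metis aff_le_iff order_antisym order_refl)

lemma Cvx_finite_below: "\<phi> \<in> Cvx \<Longrightarrow> \<phi> x \<noteq> -\<infinity>"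
  by (simp add: Cvx_def)

text \<open>A function in Cvx lying below an affine function is affine with the same slope, since
  the difference is convex and bounded above.\<close>

lemma Cvx_le_aff:
  assumes C: "\<phi> \<in> Cvx" and le: "\<phi> \<le> aff b c"
  shows "\<exists>e. \<phi> = aff b e"
proof -
  define r where "r x = real_of_ereal (\<phi> x)" for x
  have fin: "\<phi> x = ereal (r x)" for x
    using le Cvx_finite_below[OF C, of x] unfolding r_def le_fun_def aff_def
    by (cases "\<phi> x") (auto dest: spec[of _ x])
  have cv: "convex (epi \<phi>)" using C by (simp add: Cvx_def)
  define k where "k x = r x - x \<bullet> b" for x
  have kconv: "k ((1-u) *\<^sub>R x + u *\<^sub>R y) \<le> (1-u) * k x + u * k y" if "0 \<le> u" "u \<le> 1" for u x y
  proof -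
    have "(x, r x) \<in> epi \<phi>" "(y, r y) \<in> epi \<phi>" using fin by (auto simp: epi_def)
    from convexD[OF cv this, of "1-u" u] that
    have "((1-u) *\<^sub>R x + u *\<^sub>R y, (1-u) * r x + u * r y) \<in> epi \<phi>" by simp
    thus ?thesis using fin unfolding k_def by (simp add: epi_def inner_add_left algebra_simps)
  qed
  have kb: "k x \<le> c" for x using le fin[of x] unfolding k_def le_fun_def aff_def
    by (auto dest: spec[of _ x])
  have const: "k x = k 0" for x
    using convex_bounded_above_le[OF kconv kb, of x 0] convex_bounded_above_le[OF kconv kb, of 0 x]
    by simp
  have "r x = x \<bullet> b + k 0" for x using const[of x] unfolding k_def[of x] by linarith
  hence "\<phi> = aff b (k 0)" unfolding aff_def using fin by (auto simp: fun_eq_iff)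
  thus ?thesis by blast
qed

text \<open>For distinct slopes a1, b1 the affine function of slope (1-\<theta>) a1 + \<theta> b1 lies below
  max(aff a1 c1, aff b1 c2) exactly when its offset is at most (1-\<theta>) c1 + \<theta> c2; necessity is
  seen at a point where the two affine pieces agree.\<close>

lemma aff_le_max_iff:
  fixes a1 b1 :: "real^'n"
  assumes ab: "a1 \<noteq> b1" and th: "0 \<le> \<theta>" "\<theta> \<le> 1"
  shows "aff ((1-\<theta>) *\<^sub>R a1 + \<theta> *\<^sub>R b1) c \<le> (\<lambda>x. max (aff a1 c1 x) (aff b1 c2 x))
         \<longleftrightarrow> c \<le> (1-\<theta>)*c1 + \<theta>*c2"
proof
  assume le: "aff ((1-\<theta>) *\<^sub>R a1 + \<theta> *\<^sub>R b1) c \<le> (\<lambda>x. max (aff a1 c1 x) (aff b1 c2 x))"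
  define v where "v = b1 - a1"
  have vv: "v \<bullet> v > 0" using ab unfolding v_def by simp
  define x0 where "x0 = ((c1 - c2)/(v \<bullet> v)) *\<^sub>R v"
  have "x0 \<bullet> v = c1 - c2" unfolding x0_def using vv by simp
  hence x0: "x0 \<bullet> b1 + c2 = x0 \<bullet> a1 + c1" unfolding v_def by (simp add: inner_diff_right)
  have "ereal (x0 \<bullet> ((1-\<theta>) *\<^sub>R a1 + \<theta> *\<^sub>R b1) + c)
        \<le> max (ereal (x0 \<bullet> a1 + c1)) (ereal (x0 \<bullet> b1 + c2))"
    using le by (simp add: le_fun_def aff_def)
  hence "(1-\<theta>) * (x0 \<bullet> a1) + \<theta> * (x0 \<bullet> b1) + c \<le> x0 \<bullet> a1 + c1"
    using x0 by (simp add: inner_add_right)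
  moreover have "\<theta> * (x0 \<bullet> b1 + c2) = \<theta> * (x0 \<bullet> a1 + c1)" using x0 by simp
  ultimately show "c \<le> (1-\<theta>)*c1 + \<theta>*c2" by (simp add: algebra_simps)
next
  assume c: "c \<le> (1-\<theta>)*c1 + \<theta>*c2"
  have "x \<bullet> ((1-\<theta>) *\<^sub>R a1 + \<theta> *\<^sub>R b1) + c \<le> max (x \<bullet> a1 + c1) (x \<bullet> b1 + c2)" for x
  proof -
    have "x \<bullet> ((1-\<theta>) *\<^sub>R a1 + \<theta> *\<^sub>R b1) + c \<le> (1-\<theta>) * (x \<bullet> a1 + c1) + \<theta> * (x \<bullet> b1 + c2)"
      using c by (simp add: inner_add_right algebra_simps)
    also have "\<dots> \<le> max (x \<bullet> a1 + c1) (x \<bullet> b1 + c2)" by (rule comb_le_max[OF th])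
    finally show ?thesis .
  qed
  thus "aff ((1-\<theta>) *\<^sub>R a1 + \<theta> *\<^sub>R b1) c \<le> (\<lambda>x. max (aff a1 c1 x) (aff b1 c2 x))"
    by (simp add: le_fun_def aff_def ereal_max[symmetric] del: ereal_max)
qed

section \<open>Profiles of order embeddings are concave\<close>

lemma profile_le_iff:
  fixes F :: "(real^'n \<Rightarrow> ereal) \<Rightarrow> (real^'n \<Rightarrow> ereal)"
  assumes order: "\<And>\<phi> \<psi>. \<phi> \<in> Cvx \<Longrightarrow> \<psi> \<in> Cvx \<Longrightarrow> \<phi> \<le> \<psi> \<longleftrightarrow> F \<phi> \<le> F \<psi>"
    and transport: "\<And>(a::real^'n) c. F (aff a c) = aff a (h c)"
  shows "h c \<le> h c' \<longleftrightarrow> c \<le> c'"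
  using order[OF aff_Cvx aff_Cvx, of 0 c 0 c'] by (simp add: transport aff_le_iff)

lemma profile_concave:
  fixes F :: "(real^'n \<Rightarrow> ereal) \<Rightarrow> (real^'n \<Rightarrow> ereal)"
  assumes order: "\<And>\<phi> \<psi>. \<phi> \<in> Cvx \<Longrightarrow> \<psi> \<in> Cvx \<Longrightarrow> \<phi> \<le> \<psi> \<longleftrightarrow> F \<phi> \<le> F \<psi>"
    and transport: "\<And>(a::real^'n) c. F (aff a c) = aff a (h c)"
    and th: "0 \<le> \<theta>" "\<theta> \<le> 1"
  shows "(1-\<theta>)*h s + \<theta>*h t \<le> h((1-\<theta>) * s + \<theta>*t)"
proof (rule concave_from_sublevel[OF _ _ th])
  show "h x < h y" if "x < y" for x y
    using profile_le_iff[OF order transport] that by (meson not_le)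
  fix c1 c2 \<theta>' k
  assume th': "0 \<le> \<theta>'" "\<theta>' \<le> 1" and le: "h k \<le> (1-\<theta>')*h c1 + \<theta>'*h c2"
  define b :: "real^'n" where "b = axis undefined 1"
  define \<phi> where "\<phi> = (\<lambda>x. max (aff 0 c1 x) (aff b c2 x))"
  have \<phi>C: "\<phi> \<in> Cvx" unfolding \<phi>_def by (rule max_aff_Cvx)
  have "aff 0 c1 \<le> \<phi>" "aff b c2 \<le> \<phi>" unfolding \<phi>_def by (simp_all add: le_fun_def)
  hence "F (aff 0 c1) \<le> F \<phi>" "F (aff b c2) \<le> F \<phi>" using order[OF aff_Cvx \<phi>C] by blast+
  hence below: "(\<lambda>x. max (aff 0 (h c1) x) (aff b (h c2) x)) \<le> F \<phi>"
    by (simp add: transport le_fun_def)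
  have "aff ((1-\<theta>') *\<^sub>R 0 + \<theta>' *\<^sub>R b) (h k) \<le> (\<lambda>x. max (aff 0 (h c1) x) (aff b (h c2) x))"
    using le aff_le_max_iff[of 0 b \<theta>' "h k"] th' unfolding b_def by simp
  hence "F (aff (\<theta>' *\<^sub>R b) k) \<le> F \<phi>" using below by (simp add: transport)
  hence "aff ((1-\<theta>') *\<^sub>R 0 + \<theta>' *\<^sub>R b) k \<le> \<phi>" using order[OF aff_Cvx \<phi>C] by simp
  thus "k \<le> (1-\<theta>')*c1 + \<theta>'*c2"
    using aff_le_max_iff[of 0 b \<theta>' k] th' unfolding \<phi>_def b_def by simp
qed

section \<open>The transform on affine functions\<close>

locale admissible_transform =
  fixes T :: "(real^'n \<Rightarrow> ereal) \<Rightarrow> (real^'n \<Rightarrow> ereal)"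
  assumes maps: "\<And>\<phi>. \<phi> \<in> Cvx \<Longrightarrow> T \<phi> \<in> Cvx"
    and order: "\<And>\<phi> \<psi>. \<phi> \<in> Cvx \<Longrightarrow> \<psi> \<in> Cvx \<Longrightarrow> (\<phi> \<le> \<psi> \<longleftrightarrow> T \<phi> \<le> T \<psi>)"
    and homog: "\<And>\<phi>. \<phi> \<in> Cvx \<Longrightarrow> pos_homogeneous \<phi> \<Longrightarrow> T \<phi> = \<phi>"
    and sums: "\<And>\<phi>' \<psi>'. \<phi>' \<in> ImT T \<Longrightarrow> \<psi>' \<in> ImT T \<Longrightarrow> (\<exists>x. \<phi>' x + \<psi>' x \<noteq> \<infinity>)
                 \<Longrightarrow> (\<lambda>x. \<phi>' x + \<psi>' x) \<in> ImT T"
begin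

lemma T_inj: "\<phi> \<in> Cvx \<Longrightarrow> \<psi> \<in> Cvx \<Longrightarrow> T \<phi> = T \<psi> \<Longrightarrow> \<phi> = \<psi>"
  using order by (metis order_antisym order_refl)

lemma T_sum_preimage:
  assumes "\<phi>1 \<in> Cvx" "\<phi>2 \<in> Cvx" "T \<phi>1 x + T \<phi>2 x \<noteq> \<infinity>"
  shows "\<exists>\<psi>\<in>Cvx. T \<psi> = (\<lambda>x. T \<phi>1 x + T \<phi>2 x)"
proof -
  have "(\<lambda>x. T \<phi>1 x + T \<phi>2 x) \<in> T ` Cvx"
    using sums[of "T \<phi>1" "T \<phi>2"] assms unfolding ImT_def by blast
  thus ?thesis by (metis imageE)
qed

lemma T_max_linear: "T (\<lambda>x. max (aff a 0 x) (aff b 0 x)) = (\<lambda>x. max (aff a 0 x) (aff b 0 x))"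
proof (rule homog[OF max_aff_Cvx])
  have e: "max (ereal (t * p)) (ereal (t * q)) = ereal t * max (ereal p) (ereal q)"
    if "t > 0" for t p q :: real
    using that by (auto simp: max_def mult_left_mono)
  show "pos_homogeneous (\<lambda>x. max (aff a 0 x) (aff b 0 x))"
    unfolding pos_homogeneous_def aff_def by (simp add: e)
qed

lemma T_linear: "T (aff a 0) = aff a 0"
  using T_max_linear[of a a] by simp

lemma T_aff_nonpos:
  assumes "c \<le> 0" shows "\<exists>e. T (aff a c) = aff a e"
proof -
  have "T (aff a c) \<le> aff a 0"
    using order[OF aff_Cvx aff_Cvx, of a c a 0] assms T_linear by (simp add: aff_le_iff)
  thus ?thesis using Cvx_le_aff[OF maps[OF aff_Cvx]] by blast
qed

lemma T_minus_one: obtains e0 where "e0 < 0" "T (aff 0 (-1)) = aff 0 e0"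
proof -
  obtain e0 where e0: "T (aff 0 (-1)) = aff 0 e0" using T_aff_nonpos[of "-1" 0] by auto
  have "T (aff 0 (-1)) < T (aff 0 0)"
    using order[OF aff_Cvx aff_Cvx, of 0 "-1" 0 0] T_inj[OF aff_Cvx aff_Cvx, of 0 "-1" 0 0]
    by (auto simp: aff_le_iff aff_eq_iff less_le)
  hence "e0 < 0" using e0 T_linear by (simp add: less_le aff_le_iff aff_eq_iff)
  thus thesis using that e0 by blast
qed

lemma T_add_const_multiple:
  assumes \<phi>: "\<phi> \<in> Cvx" and e0: "T (aff 0 (-1)) = aff 0 e0"
  shows "\<exists>\<psi>\<in>Cvx. T \<psi> = (\<lambda>x. T \<phi> x + ereal (real k * e0))"
proof (induction k)
  case 0 show ?case using \<phi> by (auto simp: zero_ereal_def[symmetric])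
next
  case (Suc k)
  then obtain \<psi> where \<psi>: "\<psi> \<in> Cvx" "T \<psi> = (\<lambda>x. T \<phi> x + ereal (real k * e0))" by blast
  obtain x0 where "T \<phi> x0 \<noteq> \<infinity>" using maps[OF \<phi>] by (auto simp: Cvx_def)
  hence "T \<psi> x0 + T (aff 0 (-1)) x0 \<noteq> \<infinity>" using \<psi>(2) e0 by (simp add: aff_def)
  from T_sum_preimage[OF \<psi>(1) aff_Cvx this] obtain \<psi>' where
    "\<psi>' \<in> Cvx" "T \<psi>' = (\<lambda>x. T \<psi> x + T (aff 0 (-1)) x)" by blast
  moreover have "T \<psi> x + T (aff 0 (-1)) x = T \<phi> x + ereal (real (Suc k) * e0)" for x
  proof -
    have "T \<psi> x + T (aff 0 (-1)) x = T \<phi> x + (ereal (real k * e0) + ereal e0)"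
      unfolding \<psi>(2) e0 unfolding aff_def by (simp add: add.assoc)
    thus ?thesis by (simp add: algebra_simps)
  qed
  ultimately show ?case by auto
qed

text \<open>For c > 0,
  subtracting enough copies of -e0 from T(aff a c) yields the image of some \<psi> \<le> aff a c;
  \<psi> is affine with a negative offset, so T \<psi> is affine, and so is T(aff a c).\<close>

lemma T_aff_exists: "\<exists>e. T (aff a c) = aff a e"
proof (cases "c \<le> 0")
  case True then show ?thesis using T_aff_nonpos by blast
next
  case False
  obtain e0 where e0n: "e0 < 0" and e0: "T (aff 0 (-1)) = aff 0 e0" using T_minus_one by blast
  define g where "g = T (aff a c)"
  have gC: "g \<in> Cvx" unfolding g_def by (rule maps[OF aff_Cvx])
  then obtain x0 r0 where r0: "g x0 = ereal r0"
    using Cvx_finite_below[OF gC] by (auto simp: Cvx_def) (metis real_of_ereal.elims)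
  obtain k :: nat where "(r0 - x0 \<bullet> a) / (-e0) < real k" using reals_Archimedean2 by blast
  hence kk: "r0 + real k * e0 < x0 \<bullet> a" using e0n by (simp add: field_simps)
  obtain \<psi> where \<psi>: "\<psi> \<in> Cvx" "T \<psi> = (\<lambda>x. g x + ereal (real k * e0))"
    using T_add_const_multiple[OF aff_Cvx e0] unfolding g_def by blast
  have "g x + ereal (real k * e0) \<le> g x" for x
    using add_left_mono[of "ereal (real k * e0)" 0 "g x"] e0n by (simp add: mult_nonneg_nonpos)
  hence "T \<psi> \<le> T (aff a c)" unfolding \<psi>(2) g_def le_fun_def by simp
  hence "\<psi> \<le> aff a c" using order[OF \<psi>(1) aff_Cvx] by blast
  then obtain e where e: "\<psi> = aff a e" using Cvx_le_aff[OF \<psi>(1)] by blast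
  have "T \<psi> x0 < aff a 0 x0" using kk r0 \<psi>(2) by (simp add: aff_def)
  hence "\<not> aff a 0 \<le> T \<psi>" by (metis le_funD not_le)
  hence "e < 0" using order[OF aff_Cvx aff_Cvx, of a 0 a e] e T_linear by (auto simp: aff_le_iff)
  then obtain e' where e': "T \<psi> = aff a e'" using T_aff_nonpos e by fastforce
  have "g x = ereal (x \<bullet> a + (e' - real k * e0))" for x
    using fun_cong[OF trans[OF \<psi>(2)[symmetric] e'], of x] unfolding aff_def
    by (cases "g x") (auto simp: algebra_simps)
  thus ?thesis unfolding g_def aff_def by blast
qed

definition f :: "real^'n \<Rightarrow> real \<Rightarrow> real" where
  "f a c = (SOME e. T (aff a c) = aff a e)"

lemma T_aff_f: "T (aff a c) = aff a (f a c)"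
  unfolding f_def using someI_ex[OF T_aff_exists] .

lemma f_le_iff: "f a c \<le> f a c' \<longleftrightarrow> c \<le> c'"
  using order[OF aff_Cvx aff_Cvx, of a c a c'] by (simp add: T_aff_f aff_le_iff)

lemma f_eq_iff: "f a c = f a c' \<longleftrightarrow> c = c'"
  using f_le_iff by (metis order_antisym order_refl)

lemma f_zero: "f a 0 = 0"
  using T_linear[of a] by (simp add: T_aff_f aff_eq_iff)

text \<open>A preimage of an affine function is affine with the same slope: it lies below aff b c
  for some c, otherwise it would dominate all aff b c and be identically +\<infinity>.\<close>

lemma T_preimage_aff:
  assumes \<psi>: "\<psi> \<in> Cvx" and eq: "T \<psi> = aff b d"
  shows "\<exists>e. \<psi> = aff b e"
proof -
  have "\<exists>c. d \<le> f b c"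
  proof (rule ccontr)
    assume N: "\<not> ?thesis"
    have dom: "aff b c \<le> \<psi>" for c
    proof -
      have "f b c \<le> d" using N by (meson not_le less_imp_le)
      hence "T (aff b c) \<le> T \<psi>" using eq by (simp add: T_aff_f aff_le_iff)
      thus ?thesis using order[OF aff_Cvx \<psi>] by blast
    qed
    have "\<psi> x = \<infinity>" for x
    proof (rule ccontr)
      assume "\<psi> x \<noteq> \<infinity>"
      then obtain r where r: "\<psi> x = ereal r" using Cvx_finite_below[OF \<psi>, of x] by (cases "\<psi> x") auto
      have "aff b (r - x \<bullet> b + 1) x \<le> \<psi> x" using dom by (simp add: le_fun_def)
      thus False using r by (simp add: aff_def)
    qed
    thus False using \<psi> by (auto simp: Cvx_def)
  qed
  then obtain c where "d \<le> f b c" by blast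
  hence "T \<psi> \<le> T (aff b c)" using eq by (simp add: T_aff_f aff_le_iff)
  hence "\<psi> \<le> aff b c" using order[OF \<psi> aff_Cvx] by blast
  thus ?thesis using Cvx_le_aff[OF \<psi>] by blast
qed

lemma f_range_sum:
  assumes "\<phi>1 \<in> Cvx" "\<phi>2 \<in> Cvx" "(\<lambda>x. T \<phi>1 x + T \<phi>2 x) = aff p d"
  shows "\<exists>e. f p e = d"
proof -
  have "T \<phi>1 0 + T \<phi>2 0 \<noteq> \<infinity>" using fun_cong[OF assms(3), of 0] by (simp add: aff_def)
  from T_sum_preimage[OF assms(1,2) this] obtain \<psi> where \<psi>: "\<psi> \<in> Cvx" "T \<psi> = aff p d"
    using assms(3) by auto
  then obtain e where "\<psi> = aff p e" using T_preimage_aff by blast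
  thus ?thesis using \<psi> by (auto simp: T_aff_f aff_eq_iff)
qed

text \<open>All offset maps have the same range: add the fixed linear function aff (b - a) 0.\<close>

lemma f_range_indep: "\<exists>c'. f b c' = f a c"
proof -
  have "(\<lambda>x. T (aff (b - a) 0) x + T (aff a c) x) = aff b (f a c)"
    unfolding T_aff_f f_zero unfolding aff_def by (auto simp: fun_eq_iff inner_diff_right)
  thus ?thesis using f_range_sum[OF aff_Cvx aff_Cvx] by blast
qed

text \<open>The upper bound comes from the preimage of
  T(max of the two linear parts) + T(aff a1 c1), which dominates both pieces.\<close>

lemma T_max_equal_levels:
  assumes d1: "f a1 c1 = d" and d2: "f b1 c2 = d"
  shows "T (\<lambda>x. max (aff a1 c1 x) (aff b1 c2 x)) = (\<lambda>x. ereal (max (x \<bullet> a1) (x \<bullet> b1) + d))"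
    (is "T ?\<phi> = ?H")
proof (rule order_antisym)
  have "aff a1 c1 \<le> ?\<phi>" "aff b1 c2 \<le> ?\<phi>" by (simp_all add: le_fun_def)
  hence "T (aff a1 c1) \<le> T ?\<phi>" "T (aff b1 c2) \<le> T ?\<phi>"
    using order[OF aff_Cvx max_aff_Cvx] by blast+
  thus "?H \<le> T ?\<phi>" unfolding T_aff_f d1 d2 by (simp add: le_fun_def aff_def max_def)
  have sum: "(\<lambda>x. T (\<lambda>x. max (aff 0 0 x) (aff (b1 - a1) 0 x)) x + T (aff a1 c1) x) = ?H"
    unfolding T_max_linear T_aff_f d1
    by (auto simp: fun_eq_iff aff_def inner_diff_right max_def)
  have "T (\<lambda>x. max (aff 0 0 x) (aff (b1 - a1) 0 x)) 0 + T (aff a1 c1) 0 \<noteq> \<infinity>"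
    using fun_cong[OF sum, of 0] by simp
  from T_sum_preimage[OF max_aff_Cvx aff_Cvx this] sum
  obtain \<psi> where \<psi>: "\<psi> \<in> Cvx" "T \<psi> = ?H" by auto
  have "T (aff a1 c1) \<le> T \<psi>" "T (aff b1 c2) \<le> T \<psi>"
    unfolding \<psi>(2) T_aff_f d1 d2 by (simp_all add: le_fun_def aff_def)
  hence "aff a1 c1 \<le> \<psi>" "aff b1 c2 \<le> \<psi>" using order[OF aff_Cvx \<psi>(1)] by blast+
  hence "?\<phi> \<le> \<psi>" by (simp add: le_fun_def)
  thus "T ?\<phi> \<le> ?H" using order[OF max_aff_Cvx \<psi>(1)] \<psi>(2) by simp
qed

lemma f_level_affine:
  assumes ab: "a1 \<noteq> b1" and d1: "f a1 c1 = d" and d2: "f b1 c2 = d" and th: "0 \<le> \<theta>" "\<theta> \<le> 1"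
    and cm: "f ((1-\<theta>) *\<^sub>R a1 + \<theta> *\<^sub>R b1) c' = d"
  shows "c' = (1-\<theta>)*c1 + \<theta>*c2"
proof -
  define m where "m = (1-\<theta>) *\<^sub>R a1 + \<theta> *\<^sub>R b1"
  define \<phi> where "\<phi> = (\<lambda>x. max (aff a1 c1 x) (aff b1 c2 x))"
  have key: "f m c \<le> d \<longleftrightarrow> c \<le> (1-\<theta>)*c1 + \<theta>*c2" for c
  proof -
    have inner_m: "x \<bullet> m = (1-\<theta>)*(x \<bullet> a1) + \<theta>*(x \<bullet> b1)" for x
      unfolding m_def by (simp add: inner_add_right)
    have "f m c \<le> d \<longleftrightarrow> aff m (f m c) \<le> (\<lambda>x. ereal (max (x \<bullet> a1) (x \<bullet> b1) + d))"
    proof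
      assume "f m c \<le> d"
      thus "aff m (f m c) \<le> (\<lambda>x. ereal (max (x \<bullet> a1) (x \<bullet> b1) + d))"
        using comb_le_max[OF th] by (simp add: le_fun_def aff_def inner_m add_mono)
    qed (auto simp: le_fun_def aff_def dest: spec[of _ 0])
    also have "\<dots> \<longleftrightarrow> T (aff m c) \<le> T \<phi>"
      unfolding T_aff_f \<phi>_def T_max_equal_levels[OF d1 d2] ..
    also have "\<dots> \<longleftrightarrow> aff m c \<le> \<phi>"
      using order[OF aff_Cvx] unfolding \<phi>_def by (simp add: max_aff_Cvx)
    also have "\<dots> \<longleftrightarrow> c \<le> (1-\<theta>)*c1 + \<theta>*c2"
      unfolding m_def \<phi>_def by (rule aff_le_max_iff[OF ab th])
    finally show ?thesis .
  qed
  have "c' \<le> (1-\<theta>)*c1 + \<theta>*c2" using key[of c'] cm m_def by simp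
  moreover have "f m ((1-\<theta>)*c1 + \<theta>*c2) \<le> f m c'" using key cm m_def by simp
  ultimately show ?thesis by (simp add: f_le_iff)
qed

text \<open>The offset map does not depend on the slope: along the line t \<mapsto> t a the offsets
  \<kappa> t of level d = f 0 c are affine in t and have the sign of d, hence constant.\<close>

lemma f_indep: "f a c = f 0 c"
proof (cases "a = 0")
  case False
  define d where "d = f 0 c"
  define \<kappa> where "\<kappa> t = (SOME c'. f (t *\<^sub>R a) c' = d)" for t
  have \<kappa>: "f (t *\<^sub>R a) (\<kappa> t) = d" for t
    unfolding \<kappa>_def d_def by (rule someI_ex[OF f_range_indep])
  have "\<kappa>((1-\<theta>) * s + \<theta>*t) = (1-\<theta>)*\<kappa> s + \<theta>*\<kappa> t" if th: "0 \<le> \<theta>" "\<theta> \<le> 1" for s t \<theta>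
  proof (cases "s = t")
    case True then show ?thesis by (simp add: algebra_simps)
  next
    case st: False
    have "(1-\<theta>) *\<^sub>R (s *\<^sub>R a) + \<theta> *\<^sub>R (t *\<^sub>R a) = ((1-\<theta>) * s + \<theta>*t) *\<^sub>R a"
      by (simp add: scaleR_add_left)
    hence "f ((1-\<theta>) *\<^sub>R (s *\<^sub>R a) + \<theta> *\<^sub>R (t *\<^sub>R a)) (\<kappa>((1-\<theta>) * s + \<theta>*t)) = d"
      by (simp only: \<kappa>)
    thus ?thesis using f_level_affine[OF _ \<kappa> \<kappa> th] st False by simp
  qed
  hence form: "\<kappa> t = \<kappa> 0 + t * (\<kappa> 1 - \<kappa> 0)" for t by (rule affine_real_form)
  have sign: "\<kappa> t \<le> 0 \<longleftrightarrow> d \<le> 0" for t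
    using \<kappa>[of t] f_le_iff[of "t *\<^sub>R a" "\<kappa> t" 0] f_zero by simp
  have "\<kappa> 1 - \<kappa> 0 = 0"
  proof (cases "d \<le> 0")
    case True
    hence "0 \<le> - \<kappa> 0 + t * (-(\<kappa> 1 - \<kappa> 0))" for t using sign[of t] form[of t]
      by (simp add: algebra_simps)
    thus ?thesis using affine_nonneg_const by fastforce
  next
    case False
    hence "0 \<le> \<kappa> 0 + t * (\<kappa> 1 - \<kappa> 0)" for t using sign[of t] form[of t] by simp
    thus ?thesis by (rule affine_nonneg_const)
  qed
  moreover have "\<kappa> 0 = c" using \<kappa>[of 0] unfolding d_def by (simp add: f_eq_iff)
  ultimately show ?thesis using \<kappa>[of 1] unfolding d_def by simp
qed simp

section \<open>The common profile u is linear\<close>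

definition u :: "real \<Rightarrow> real" where "u c = f 0 c"

lemma T_aff: "T (aff a c) = aff a (u c)"
  unfolding u_def T_aff_f f_indep[of a c] ..

lemma u_le_iff: "u c \<le> u c' \<longleftrightarrow> c \<le> c'"
  by (rule profile_le_iff[OF order T_aff])

lemma u_eq_iff: "u c = u c' \<longleftrightarrow> c = c'"
  using u_le_iff by (metis order_antisym order_refl)

lemma u_zero: "u 0 = 0"
  unfolding u_def by (rule f_zero)

lemma u_concave: "0 \<le> \<theta> \<Longrightarrow> \<theta> \<le> 1 \<Longrightarrow> (1-\<theta>)*u s + \<theta>*u t \<le> u((1-\<theta>) * s + \<theta>*t)"
  by (rule profile_concave[OF order T_aff])

lemma u_range_add: "\<exists>c''. u c'' = u c + u c'"
proof -
  have "(\<lambda>x. T (aff 0 c) x + T (aff 0 c') x) = aff 0 (u c + u c')"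
    unfolding T_aff unfolding aff_def by (auto simp: fun_eq_iff)
  thus ?thesis using f_range_sum[OF aff_Cvx aff_Cvx] unfolding u_def by blast
qed

lemma u_continuous: "continuous_on UNIV u"
proof -
  have "convex_on UNIV (\<lambda>x. - u x)" unfolding convex_on_def
  proof (intro conjI convex_UNIV ballI allI impI)
    fix x y a b :: real
    assume "0 \<le> a" "0 \<le> b" "a + b = 1"
    thus "- u (a *\<^sub>R x + b *\<^sub>R y) \<le> a * - u x + b * - u y"
      using u_concave[of b x y] by (simp add: eq_diff_eq[symmetric])
  qed
  from continuous_on_minus[OF convex_on_continuous[OF open_UNIV this]] show ?thesis by simp
qed

text \<open>The range of u is closed under addition, contains u 1 > 0 and u (-1) < 0, and is an
  interval by continuity; hence u is onto.\<close>

lemma u_surj: "\<exists>c. u c = y"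
proof -
  have mult: "\<exists>c. u c = real n * u v" for n v
  proof (induction n)
    case (Suc n)
    then obtain c where "u c = real n * u v" by blast
    with u_range_add[of c v] show ?case by (auto simp: algebra_simps)
  qed (auto intro: u_zero)
  have p: "u 1 > 0" and n: "u (-1) < 0" using u_le_iff[of 1 0] u_le_iff[of 0 "-1"] u_zero by auto
  obtain N :: nat where "y / u 1 < real N" using reals_Archimedean2 by blast
  hence "y < real N * u 1" using p by (simp add: field_simps)
  then obtain c2 where c2: "y \<le> u c2" using mult[of N 1] by (metis less_imp_le)
  obtain M :: nat where "(-y) / (- u (-1)) < real M" using reals_Archimedean2 by blast
  hence "real M * u (-1) < y" using n by (simp add: field_simps)
  then obtain c1 where c1: "u c1 \<le> y" using mult[of M "-1"] by (metis less_imp_le)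
  have "c1 \<le> c2" using c1 c2 u_le_iff by (meson order_trans)
  from IVT'[of u c1 y c2, OF c1 c2 this continuous_on_subset[OF u_continuous]] show ?thesis by auto
qed

text \<open>Translation by e in the coordinates given by u, and the matching operation on Cvx:
  the preimage of T \<phi> + u e.\<close>

definition kap :: "real \<Rightarrow> real \<Rightarrow> real" where
  "kap e c = (SOME c''. u c'' = u c + u e)"

definition shift :: "real \<Rightarrow> (real^'n \<Rightarrow> ereal) \<Rightarrow> (real^'n \<Rightarrow> ereal)" where
  "shift e \<phi> = (SOME \<psi>. \<psi> \<in> Cvx \<and> T \<psi> = (\<lambda>x. T \<phi> x + ereal (u e)))"

lemma kap: "u (kap e c) = u c + u e"
  unfolding kap_def by (rule someI_ex[OF u_surj])

lemma shift:
  assumes "\<phi> \<in> Cvx" shows "shift e \<phi> \<in> Cvx" "T (shift e \<phi>) = (\<lambda>x. T \<phi> x + ereal (u e))"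
proof -
  obtain x0 where "T \<phi> x0 \<noteq> \<infinity>" using maps[OF assms] by (auto simp: Cvx_def)
  hence "T \<phi> x0 + T (aff 0 e) x0 \<noteq> \<infinity>" unfolding T_aff by (simp add: aff_def)
  from T_sum_preimage[OF assms aff_Cvx this]
  have "\<exists>\<psi>\<in>Cvx. T \<psi> = (\<lambda>x. T \<phi> x + ereal (u e))" unfolding T_aff by (simp add: aff_def)
  hence "\<exists>\<psi>. \<psi> \<in> Cvx \<and> T \<psi> = (\<lambda>x. T \<phi> x + ereal (u e))" by blast
  from someI_ex[OF this] show "shift e \<phi> \<in> Cvx" "T (shift e \<phi>) = (\<lambda>x. T \<phi> x + ereal (u e))"
    unfolding shift_def by blast+
qed

lemma shift_order:
  assumes "\<phi> \<in> Cvx" "\<psi> \<in> Cvx" shows "\<phi> \<le> \<psi> \<longleftrightarrow> shift e \<phi> \<le> shift e \<psi>"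
proof -
  have "\<phi> \<le> \<psi> \<longleftrightarrow> T \<phi> \<le> T \<psi>" by (rule order[OF assms])
  also have "\<dots> \<longleftrightarrow> T (shift e \<phi>) \<le> T (shift e \<psi>)"
    unfolding shift(2)[OF assms(1)] shift(2)[OF assms(2)] le_fun_def
    by (simp add: ereal_add_le_add_iff2)
  also have "\<dots> \<longleftrightarrow> shift e \<phi> \<le> shift e \<psi>"
    by (rule order[OF shift(1)[OF assms(1)] shift(1)[OF assms(2)], symmetric])
  finally show ?thesis .
qed

lemma shift_aff: "shift e (aff a c) = aff a (kap e c)"
  by (rule T_inj[OF shift(1)[OF aff_Cvx] aff_Cvx])
     (simp only: shift(2)[OF aff_Cvx] T_aff kap, simp add: aff_def algebra_simps)

text \<open>Both kap e and its inverse kap e' (u e' = - u e) are concave profiles, so kap e is affine;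
  its only possible form is c \<mapsto> c + e, since a fixed point would force u e = 0.  Hence u is
  additive.\<close>

lemma u_additive: "u (c + e) = u c + u e"
proof -
  have kap_concave: "(1-\<theta>)*kap e' s + \<theta>*kap e' t \<le> kap e' ((1-\<theta>) * s + \<theta>*t)"
    if "0 \<le> \<theta>" "\<theta> \<le> 1" for e' s t \<theta>
    by (rule profile_concave[OF shift_order shift_aff that])
  have kap_mono: "s \<le> t \<Longrightarrow> kap e' s \<le> kap e' t" for e' s t
    using profile_le_iff[OF shift_order shift_aff] by blast
  obtain e' where e': "u e' = - u e" using u_surj by blast
  have inv1: "kap e' (kap e c) = c" and inv2: "kap e (kap e' c) = c" for c
    using kap[of e' "kap e c"] kap[of e c] kap[of e "kap e' c"] kap[of e' c] e' u_eq_iff by simp_all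
  have "kap e ((1-\<theta>) * s + \<theta>*t) = (1-\<theta>) * kap e s + \<theta> * kap e t"
    if th: "0 \<le> \<theta>" "\<theta> \<le> 1" for s t \<theta>
  proof (rule order_antisym)
    have "(1-\<theta>) * s + \<theta>*t \<le> kap e' ((1-\<theta>) * kap e s + \<theta> * kap e t)"
      using kap_concave[OF th, of e' "kap e s" "kap e t"] by (simp add: inv1)
    from kap_mono[OF this, of e]
    show "kap e ((1-\<theta>) * s + \<theta>*t) \<le> (1-\<theta>) * kap e s + \<theta> * kap e t" by (simp add: inv2)
  qed (rule kap_concave[OF th])
  hence form: "kap e t = kap e 0 + t * (kap e 1 - kap e 0)" for t by (rule affine_real_form)
  have k0: "kap e 0 = e" using kap[of e 0] u_zero u_eq_iff by simp
  have "kap e c = c + e"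
  proof (cases "e = 0")
    case True then show ?thesis using kap[of e c] u_zero u_eq_iff by simp
  next
    case False
    have "kap e 1 - kap e 0 = 1"
    proof (rule ccontr)
      define \<alpha> where "\<alpha> = kap e 1 - kap e 0"
      assume "kap e 1 - kap e 0 \<noteq> 1"
      hence na: "1 - \<alpha> \<noteq> 0" unfolding \<alpha>_def by simp
      define cs where "cs = e / (1 - \<alpha>)"
      have "kap e cs = e + cs * \<alpha>" using form[of cs] k0 unfolding \<alpha>_def by simp
      also have "\<dots> = cs" unfolding cs_def using na by (simp add: field_simps)
      finally have "u e = u 0" using kap[of e cs] u_zero by simp
      thus False using False u_eq_iff by simp
    qed
    thus ?thesis using form[of c] k0 by simp
  qed
  thus ?thesis using kap[of e c] by simp
qed

lemma u_linear: "u c = u 1 * c"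
  by (rule concave_additive_linear[of u]) (auto intro: u_concave u_additive)

end

theorem mainTheorem5:
  fixes T :: "(real^'n \<Rightarrow> ereal) \<Rightarrow> (real^'n \<Rightarrow> ereal)"
  assumes maps: "\<And>\<phi>. \<phi> \<in> Cvx \<Longrightarrow> T \<phi> \<in> Cvx"
    and order: "\<And>\<phi> \<psi>. \<phi> \<in> Cvx \<Longrightarrow> \<psi> \<in> Cvx \<Longrightarrow> (\<phi> \<le> \<psi> \<longleftrightarrow> T \<phi> \<le> T \<psi>)"
    and homog: "\<And>\<phi>. \<phi> \<in> Cvx \<Longrightarrow> pos_homogeneous \<phi> \<Longrightarrow> T \<phi> = \<phi>"
    and sums: "\<And>\<phi>' \<psi>'. \<phi>' \<in> ImT T \<Longrightarrow> \<psi>' \<in> ImT T \<Longrightarrow> (\<exists>x. \<phi>' x + \<psi>' x \<noteq> \<infinity>)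
                 \<Longrightarrow> (\<lambda>x. \<phi>' x + \<psi>' x) \<in> ImT T"
  shows "\<exists>\<gamma>::real. \<gamma> > 0 \<and> (\<forall>(a::real^'n) (c::real).
           T (\<lambda>x. ereal (x \<bullet> a + c)) = (\<lambda>x. ereal (x \<bullet> a + \<gamma> * c)))"
proof -
  interpret admissible_transform T
    by (rule admissible_transform.intro[OF maps order homog sums])
  have "u 1 > 0" using u_le_iff[of 1 0] u_zero by simp
  moreover have "T (\<lambda>x. ereal (x \<bullet> a + c)) = (\<lambda>x. ereal (x \<bullet> a + u 1 * c))" for a c
    using T_aff[of a c] u_linear[of c] unfolding aff_def by simp
  ultimately show ?thesis by blast
qed

end
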